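(* Let $f\in\mathcal H_0$, let $u$ solve the gradient flow $\partial_tu+\partial J(u)\ni0$, $u(0)=f$, and let $\Lambda(t):=pJ(u(t))/\|u(t)\|^p$ for $0<t<T_{\mathrm{ex}}$. Then $\Lambda'(t)\le0$ for almost all $t\in(0,T_{\mathrm{ex}})$. Furthermore, $\Lambda'(t)=0$ if and only if $u(t)$ is an eigenfunction with eigenvalue $\Lambda(t)$ and $\Lambda$ is differentiable at $t$.
   Context: $\mathcal H$ is a real Hilbert space with inner product $\langle\cdot,\cdot\rangle$ and norm $\|\cdot\|$; $p\ge1$. $J:\mathcal H\to\mathbb R\cup\{\infty\}$ is convex, lower semicontinuous, proper, with dense effective domain, and absolutely $p$-homogeneous: $J(cu)=|c|^pJ(u)$ for $c\ne0$ and $J(0)=0$. Standing coercivity assumption: $\lambda_1:=\inf_{u\in\mathcal H_0}pJ(u)/\|u\|^p>0$. $\partial J(u)=\{\zeta: J(u)+\langle\zeta,v-u\rangle\le J(v)\ \forall v\}$; $\mathcal N(J)=\{u:J(u)=0\}$; $\mathcal H_0:=\mathcal N(J)^\perp\setminus\{0\}$. The gradient flow solution (Brezis) is the unique continuous $u:[0,\infty)\to\mathcal H$, Lipschitz on $[\delta,\infty)$ for all $\delta>0$, right-differentiable on $(0,\infty)$ with $u(0)=f$ and $\partial_t^+u(t)=-\zeta(t)$, $\zeta(t)$ the minimal-norm element of $\partial J(u(t))$. $T_{\mathrm{ex}}:=\inf\{T>0:u(t)=0\ \forall t\ge T\}$. An eigenfunction with eigenvalue $\mu\in\mathbb R$ is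 any $v\ne0$ with $\mu\|v\|^{p-2}v\in\partial J(v)$. *)

theory Defs
  imports "HOL-Analysis.Analysis"
begin

definition convex_functional :: "('a::real_vector \<Rightarrow> ereal) \<Rightarrow> bool" where
  "convex_functional J \<longleftrightarrow>
     (\<forall>x y (t::real). 0 < t \<and> t < 1 \<longrightarrow>
        J ((1 - t) *\<^sub>R x + t *\<^sub>R y) \<le> ereal (1 - t) * J x + ereal t * J y)"

definition lsc_functional :: "('a::topological_space \<Rightarrow> ereal) \<Rightarrow> bool" where
  "lsc_functional J \<longleftrightarrow> (\<forall>c::ereal. closed {x. J x \<le> c})"

definition proper_functional :: "('a \<Rightarrow> ereal) \<Rightarrow> bool" where
  "proper_functional J \<longleftrightarrow> (\<forall>x. J x \<noteq> -\<infinity>) \<and> (\<exists>x. J x < \<infinity>)"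

definition eff_dom :: "('a \<Rightarrow> ereal) \<Rightarrow> 'a set" where
  "eff_dom J = {x. J x < \<infinity>}"

definition abs_p_homogeneous :: "real \<Rightarrow> ('a::real_vector \<Rightarrow> ereal) \<Rightarrow> bool" where
  "abs_p_homogeneous p J \<longleftrightarrow>
     J 0 = 0 \<and> (\<forall>(c::real) x. c \<noteq> 0 \<longrightarrow> J (c *\<^sub>R x) = ereal (\<bar>c\<bar> powr p) * J x)"

definition null_space :: "('a::real_vector \<Rightarrow> ereal) \<Rightarrow> 'a set" where
  "null_space J = {u. J u = 0}"

definition H0 :: "('a::real_inner \<Rightarrow> ereal) \<Rightarrow> 'a set" where
  "H0 J = {u. \<forall>v\<in>null_space J. inner u v = 0} - {0}"

definition lambda1 :: "real \<Rightarrow> ('a::real_inner \<Rightarrow> ereal) \<Rightarrow> ereal" where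
  "lambda1 p J = (INF u\<in>H0 J. ereal p * J u / ereal (norm u powr p))"

definition subdiff :: "('a::real_inner \<Rightarrow> ereal) \<Rightarrow> 'a \<Rightarrow> 'a set" where
  "subdiff J u = {\<zeta>. \<forall>v. J u + ereal (inner \<zeta> (v - u)) \<le> J v}"

definition min_norm_subgrad :: "('a::real_inner \<Rightarrow> ereal) \<Rightarrow> 'a \<Rightarrow> 'a \<Rightarrow> bool" where
  "min_norm_subgrad J u \<zeta> \<longleftrightarrow> \<zeta> \<in> subdiff J u \<and> (\<forall>\<eta>\<in>subdiff J u. norm \<zeta> \<le> norm \<eta>)"

definition gradient_flow :: "('a::real_inner \<Rightarrow> ereal) \<Rightarrow> 'a \<Rightarrow> (real \<Rightarrow> 'a) \<Rightarrow> bool" where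
  "gradient_flow J f u \<longleftrightarrow>
     continuous_on {0..} u \<and>
     (\<forall>\<delta>>0. \<exists>L. L-lipschitz_on {\<delta>..} u) \<and>
     u 0 = f \<and>
     (\<forall>t>0. \<exists>\<zeta>. min_norm_subgrad J (u t) \<zeta> \<and>
                 (u has_vector_derivative (- \<zeta>)) (at t within {t..}))"

text \<open>Extinction time (infinity if the solution never vanishes identically).\<close>
definition T_ex :: "(real \<Rightarrow> 'a::zero) \<Rightarrow> ereal" where
  "T_ex u = Inf (ereal ` {T. T > 0 \<and> (\<forall>t\<ge>T. u t = 0)})"

definition eigenfunction :: "real \<Rightarrow> ('a::real_inner \<Rightarrow> ereal) \<Rightarrow> 'a \<Rightarrow> real \<Rightarrow> bool" where
  "eigenfunction p J v \<mu> \<longleftrightarrow> v \<noteq> 0 \<and> (\<mu> * norm v powr (p - 2)) *\<^sub>R v \<in> subdiff J v"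

text \<open>Rayleigh quotient; J(u(t)) is finite for t > 0 along the flow.\<close>
definition rayleigh :: "real \<Rightarrow> ('a::real_normed_vector \<Rightarrow> ereal) \<Rightarrow> 'a \<Rightarrow> real" where
  "rayleigh p J v = p * real_of_ereal (J v) / norm v powr p"

end

(* Along the flow u' = -z with z(t) the minimal-norm subgradient, the speed |z t| is
   nonincreasing because the flow is a contraction, and z is right-continuous; hence J(u t) has
   right derivative -|z t|^2. Euler's identity <z, u> = p J(u) for p-homogeneous J gives |u|^2 the
   right derivative -2p J(u), so the Rayleigh quotient has right derivative
     p (<z, u>^2 - |z|^2 |u|^2) / |u|^(p+2),
   which is <= 0 by Cauchy-Schwarz, with equality exactly when z is parallel to u, i.e. when u is
   an eigenfunction with eigenvalue Lambda. A continuous function whose right derivative is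
   continuous at t is differentiable at t, and the monotone function |z| is continuous off a
   countable set; this gives the almost-everywhere statement.
   Right-continuity of z is the Hilbert-space step: approximate subgradients at u t whose norm is
   close to the infimum form a Cauchy sequence by the parallelogram law, and their limit is a
   genuine subgradient, so near t the vectors z s and z t have a long midpoint. *)

theory Submission
  imports Defs
begin

section \<open>Real analysis\<close>

lemma right_deriv_neg_imp_le:
  fixes f f' :: "real \<Rightarrow> real"
  assumes "a \<le> b" and cont: "continuous_on {a..b} f"
    and der: "\<And>x. x \<in> {a..<b} \<Longrightarrow> (f has_real_derivative f' x) (at x within {x..})"
    and neg: "\<And>x. x \<in> {a..<b} \<Longrightarrow> f' x < 0"
  shows "f b \<le> f a"
proof -
  define Z where "Z = {x\<in>{a..b}. f x \<le> f a}"
  have "closed Z"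
    unfolding Z_def using continuous_closed_preimage[OF cont closed_atLeastAtMost closed_atMost[of "f a"]]
    by (simp add: vimage_def Int_def)
  moreover have "a \<in> Z" "bdd_above Z"
    using \<open>a \<le> b\<close> by (auto simp: Z_def intro: bdd_aboveI[of _ b])
  ultimately have "Sup Z \<in> Z"
    using closed_contains_Sup by blast
  moreover have "Sup Z = b"
  proof (rule ccontr)
    define c where "c = Sup Z"
    assume "Sup Z \<noteq> b"
    with \<open>Sup Z \<in> Z\<close> have c: "c \<in> {a..<b}" "f c \<le> f a" by (auto simp: Z_def c_def)
    have "((\<lambda>y. (f y - f c) / (y - c)) \<longlongrightarrow> f' c) (at_right c)"
      using der[OF c(1)] by (simp add: has_field_derivative_iff at_within_Ici_at_right)
    then have "\<forall>\<^sub>F y in at_right c. (f y - f c) / (y - c) < 0 \<and> y < b \<and> c < y"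
      using neg[OF c(1)] c(1) order_tendstoD(2)[OF tendsto_ident_at[of c "{c<..}"], of b]
      by (auto intro!: eventually_conj order_tendstoD(2) eventually_at_right_less)
    then obtain y where y: "(f y - f c) / (y - c) < 0" "y < b" "c < y"
      using eventually_happens' by force
    then have "y \<in> Z"
      using c by (auto simp: Z_def divide_less_0_iff)
    then show False
      using cSup_upper[OF _ \<open>bdd_above Z\<close>] y(3) unfolding c_def by fastforce
  qed
  ultimately show ?thesis by (simp add: Z_def)
qed

lemma right_deriv_nonpos_imp_le:
  fixes f f' :: "real \<Rightarrow> real"
  assumes "a \<le> b" and cont: "continuous_on {a..b} f"
    and der: "\<And>x. x \<in> {a..<b} \<Longrightarrow> (f has_real_derivative f' x) (at x within {x..})"
    and nonpos: "\<And>x. x \<in> {a..<b} \<Longrightarrow> f' x \<le> 0"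
  shows "f b \<le> f a"
proof (rule field_le_epsilon)
  fix e :: real assume "e > 0"
  define \<delta> where "\<delta> = e / (b - a + 1)"
  have "\<delta> > 0" "\<delta> * (b - a) \<le> e"
    using \<open>e > 0\<close> \<open>a \<le> b\<close> by (auto simp: \<delta>_def field_simps)
  have "f b - \<delta> * b \<le> f a - \<delta> * a"
  proof (rule right_deriv_neg_imp_le[OF \<open>a \<le> b\<close>, where f' = "\<lambda>x. f' x - \<delta>"])
    show "continuous_on {a..b} (\<lambda>x. f x - \<delta> * x)"
      by (intro continuous_intros cont)
    show "((\<lambda>x. f x - \<delta> * x) has_real_derivative f' x - \<delta>) (at x within {x..})"
      if "x \<in> {a..<b}" for x
      using der[OF that] by (auto intro!: derivative_eq_intros)
  qed (use nonpos \<open>\<delta> > 0\<close> in force)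
  with \<open>\<delta> * (b - a) \<le> e\<close> show "f b \<le> f a + e"
    by (simp add: algebra_simps)
qed

lemma right_deriv_bounds_imp_quotient_bounds:
  fixes f f' :: "real \<Rightarrow> real"
  assumes "a < b" and cont: "continuous_on {a..b} f"
    and der: "\<And>x. x \<in> {a..<b} \<Longrightarrow> (f has_real_derivative f' x) (at x within {x..})"
    and bounds: "\<And>x. x \<in> {a..<b} \<Longrightarrow> f' x \<in> {m..M}"
  shows "(f b - f a) / (b - a) \<in> {m..M}"
proof -
  have "f b - M * b \<le> f a - M * a"
  proof (rule right_deriv_nonpos_imp_le[where f = "\<lambda>x. f x - M * x" and f' = "\<lambda>x. f' x - M"])
    show "continuous_on {a..b} (\<lambda>x. f x - M * x)"
      by (intro continuous_intros cont)
  qed (use assms in \<open>auto intro!: derivative_eq_intros\<close>)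
  moreover have "m * b - f b \<le> m * a - f a"
  proof (rule right_deriv_nonpos_imp_le[where f = "\<lambda>x. m * x - f x" and f' = "\<lambda>x. m - f' x"])
    show "continuous_on {a..b} (\<lambda>x. m * x - f x)"
      by (intro continuous_intros cont)
  qed (use assms in \<open>auto intro!: derivative_eq_intros\<close>)
  ultimately show ?thesis
    using \<open>a < b\<close> by (simp add: field_simps)
qed

lemma DERIV_of_continuous_right_deriv:
  fixes f f' :: "real \<Rightarrow> real"
  assumes cont: "\<forall>\<^sub>F x in nhds t. isCont f x"
    and der: "\<forall>\<^sub>F x in nhds t. (f has_real_derivative f' x) (at x within {x..})"
    and "isCont f' t"
  shows "(f has_real_derivative f' t) (at t)"
  unfolding has_field_derivative_iff
proof (rule tendstoI)
  fix r :: real assume "r > 0"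
  have "\<forall>\<^sub>F x in at t. dist (f' x) (f' t) < r / 2"
    using \<open>isCont f' t\<close> \<open>r > 0\<close> unfolding isCont_def by (intro tendstoD) auto
  then have "\<forall>\<^sub>F x in nhds t. f' x \<in> cball (f' t) (r/2)"
    unfolding eventually_at_filter by eventually_elim (use \<open>r > 0\<close> in \<open>auto simp: dist_commute\<close>)
  with cont der have "\<forall>\<^sub>F x in nhds t. isCont f x
      \<and> (f has_real_derivative f' x) (at x within {x..}) \<and> f' x \<in> cball (f' t) (r/2)"
    by eventually_elim blast
  then obtain d where "d > 0" and d: "\<And>x. dist x t < d \<Longrightarrow> isCont f x
      \<and> (f has_real_derivative f' x) (at x within {x..}) \<and> f' x \<in> cball (f' t) (r/2)"
    by (auto simp: eventually_nhds_metric)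
  have "dist ((f x - f t) / (x - t)) (f' t) < r" if "x \<noteq> t" "dist x t < d" for x
  proof -
    define lo hi where "lo = min x t" and "hi = max x t"
    have "lo < hi" and "{lo..hi} \<subseteq> {y. dist y t < d}"
      using that by (auto simp: lo_def hi_def dist_real_def)
    with d have lohi: "\<And>y. y \<in> {lo..hi} \<Longrightarrow> isCont f y
        \<and> (f has_real_derivative f' y) (at y within {y..}) \<and> f' y \<in> cball (f' t) (r/2)"
      by blast
    have "(f x - f t) / (x - t) = (f hi - f lo) / (hi - lo)"
      using that by (auto simp: lo_def hi_def min_def max_def field_simps)
    also have "\<dots> \<in> cball (f' t) (r/2)"
      unfolding cball_eq_atLeastAtMost
      by (rule right_deriv_bounds_imp_quotient_bounds[OF \<open>lo < hi\<close>, where f' = f'])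
        (use lohi in \<open>auto simp flip: cball_eq_atLeastAtMost intro!: continuous_at_imp_continuous_on\<close>)
    finally show ?thesis
      using \<open>r > 0\<close> by (simp add: dist_commute)
  qed
  then show "\<forall>\<^sub>F x in at t. dist ((f x - f t) / (x - t)) (f' t) < r"
    using \<open>d > 0\<close> by (auto simp: eventually_at)
qed

lemma DERIV_zero_iff_right_deriv_zero:
  fixes f :: "real \<Rightarrow> real"
  assumes "(f has_real_derivative D) (at t within {t..})"
  shows "(f has_real_derivative 0) (at t) \<longleftrightarrow> D = 0 \<and> f differentiable (at t)"
proof -
  have "D = D'" if "(f has_real_derivative D') (at t)" for D'
  proof (rule vector_derivative_unique_within)
    show "at t within {t..} \<noteq> bot"
      by (simp add: at_within_Ici_at_right)
    show "(f has_vector_derivative D) (at t within {t..})"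
      using assms by (simp add: has_real_derivative_iff_has_vector_derivative)
    show "(f has_vector_derivative D') (at t within {t..})"
      using has_field_derivative_at_within[OF that]
      by (simp add: has_real_derivative_iff_has_vector_derivative)
  qed
  then show ?thesis
    by (auto simp: real_differentiable_def)
qed

lemma has_vector_derivative_imp_quotient_tendsto:
  fixes f :: "real \<Rightarrow> 'a::real_normed_vector"
  assumes "(f has_vector_derivative f') (at x within S)"
  shows "((\<lambda>y. (f y - f x) /\<^sub>R (y - x)) \<longlongrightarrow> f') (at x within S)"
proof -
  have lim: "((\<lambda>y. (f y - f x - (y - x) *\<^sub>R f') /\<^sub>R norm (y - x)) \<longlongrightarrow> 0) (at x within S)"
    using assms unfolding has_vector_derivative_def has_derivative_within
    by (simp add: algebra_simps divide_inverse_commute scaleR_conv_of_real)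
  have bound: "\<forall>\<^sub>F y in at x within S. norm ((f y - f x) /\<^sub>R (y - x) - f')
      \<le> norm ((f y - f x - (y - x) *\<^sub>R f') /\<^sub>R norm (y - x))"
  proof (unfold eventually_at_filter, intro always_eventually allI impI)
    fix y assume "y \<noteq> x"
    then have "(f y - f x) /\<^sub>R (y - x) - f' = (f y - f x - (y - x) *\<^sub>R f') /\<^sub>R (y - x)"
      by (simp add: scaleR_diff_right)
    then have "norm ((f y - f x) /\<^sub>R (y - x) - f')
        = norm ((f y - f x - (y - x) *\<^sub>R f') /\<^sub>R norm (y - x))"
      by simp
    then show "norm ((f y - f x) /\<^sub>R (y - x) - f')
        \<le> norm ((f y - f x - (y - x) *\<^sub>R f') /\<^sub>R norm (y - x))"
      by (rule eq_refl)
  qed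
  have "((\<lambda>y. (f y - f x) /\<^sub>R (y - x) - f') \<longlongrightarrow> 0) (at x within S)"
    by (rule Lim_null_comparison[OF bound tendsto_norm_zero[OF lim]])
  then show ?thesis
    by (subst Lim_null)
qed

lemma has_real_derivative_norm_power2:
  fixes w :: "real \<Rightarrow> 'a::real_inner"
  assumes "(w has_vector_derivative w') (at x within S)"
  shows "((\<lambda>s. (norm (w s))\<^sup>2) has_real_derivative 2 * inner (w x) w') (at x within S)"
proof -
  have "((\<lambda>s. inner (w s) (w s)) has_derivative (\<lambda>h. inner (w x) (h *\<^sub>R w') + inner (h *\<^sub>R w') (w x)))
      (at x within S)"
    using assms unfolding has_vector_derivative_def by (intro has_derivative_inner)
  then show ?thesis
    unfolding has_field_derivative_def power2_norm_eq_inner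
    by (rule has_derivative_eq_rhs) (auto simp: fun_eq_iff inner_commute algebra_simps)
qed

lemma power2_norm_powr:
  fixes x :: "'a::real_normed_vector"
  assumes "p > 0"
  shows "((norm x)\<^sup>2) powr (p / 2) = norm x powr p"
  using assms by (cases "x = 0") (simp_all add: powr_powr flip: powr_numeral)

lemma power2_powr_half_minus_one:
  fixes x :: real
  assumes "x > 0"
  shows "(x\<^sup>2) powr (p / 2 - 1) = x powr p / x\<^sup>2"
proof -
  have "(x\<^sup>2) powr (p / 2 - 1) = x powr (p - 2)"
    using assms by (simp add: powr_powr algebra_simps flip: powr_numeral)
  then show ?thesis
    using assms by (simp add: powr_diff flip: powr_numeral)
qed

section \<open>Inner product spaces\<close>

lemma parallelogram_midpoint:
  fixes x y :: "'a::real_inner"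
  shows "(norm (x - y))\<^sup>2 = 2 * (norm x)\<^sup>2 + 2 * (norm y)\<^sup>2 - 4 * (norm ((1/2) *\<^sub>R (x + y)))\<^sup>2"
  by (simp add: power2_norm_eq_inner inner_commute algebra_simps)

lemma Cauchy_Schwarz_eq_imp_parallel:
  fixes x y :: "'a::real_inner"
  assumes "y \<noteq> 0" and "(inner x y)\<^sup>2 = (norm x)\<^sup>2 * (norm y)\<^sup>2"
  shows "x = (inner x y / (norm y)\<^sup>2) *\<^sub>R y"
proof -
  define c where "c = inner x y / (norm y)\<^sup>2"
  have "(norm (x - c *\<^sub>R y))\<^sup>2 = (norm x)\<^sup>2 - 2 * c * inner x y + c\<^sup>2 * (norm y)\<^sup>2"
    unfolding power2_norm_eq_inner by (simp add: inner_commute algebra_simps power2_eq_square)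
  also have "\<dots> = (norm x)\<^sup>2 - (inner x y)\<^sup>2 / (norm y)\<^sup>2"
    using assms(1) by (simp add: c_def field_simps power2_eq_square)
  also have "\<dots> = 0"
    using assms by simp
  finally show ?thesis
    by (simp add: c_def)
qed

lemma Cauchy_of_nested_convex_near_minimizers:
  fixes C :: "nat \<Rightarrow> 'a::real_inner set" and \<eta> :: "nat \<Rightarrow> 'a"
  assumes "decseq C" and convex: "\<And>k. convex (C k)" and \<eta>: "\<And>k. \<eta> k \<in> C k"
    and lower: "\<And>k x. x \<in> C k \<Longrightarrow> m k \<le> norm x" and "\<And>k. 0 \<le> m k"
    and "m \<longlonglongrightarrow> M" and "(\<lambda>k. norm (\<eta> k)) \<longlonglongrightarrow> M"
  shows "Cauchy \<eta>"
proof (rule CauchyI)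
  fix \<epsilon> :: real assume "\<epsilon> > 0"
  have "(\<lambda>k. (norm (\<eta> k))\<^sup>2) \<longlonglongrightarrow> M\<^sup>2" "(\<lambda>k. (m k)\<^sup>2) \<longlonglongrightarrow> M\<^sup>2"
    by (intro tendsto_intros assms)+
  then have "\<forall>\<^sub>F k in sequentially. (norm (\<eta> k))\<^sup>2 < M\<^sup>2 + \<epsilon>\<^sup>2 / 8 \<and> M\<^sup>2 - \<epsilon>\<^sup>2 / 8 < (m k)\<^sup>2"
    using \<open>\<epsilon> > 0\<close> by (intro eventually_conj order_tendstoD) auto
  then obtain N where N: "\<And>k. k \<ge> N \<Longrightarrow> (norm (\<eta> k))\<^sup>2 < M\<^sup>2 + \<epsilon>\<^sup>2 / 8 \<and> M\<^sup>2 - \<epsilon>\<^sup>2 / 8 < (m k)\<^sup>2"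
    by (auto simp: eventually_sequentially)
  have "norm (\<eta> k - \<eta> l) < \<epsilon>" if "N \<le> k" "N \<le> l" for k l
  proof -
    have "\<eta> k \<in> C N" "\<eta> l \<in> C N"
      using \<eta> \<open>decseq C\<close> that by (auto simp: decseq_def)
    then have "(1/2) *\<^sub>R (\<eta> k + \<eta> l) \<in> C N"
      using convexD[OF convex, of "\<eta> k" N "\<eta> l" "1/2" "1/2"] by (simp add: scaleR_add_right)
    then have "(m N)\<^sup>2 \<le> (norm ((1/2) *\<^sub>R (\<eta> k + \<eta> l)))\<^sup>2"
      using lower \<open>0 \<le> m N\<close> by (blast intro: power_mono)
    then have "(norm (\<eta> k - \<eta> l))\<^sup>2 < \<epsilon>\<^sup>2"
      unfolding parallelogram_midpoint using N[of k] N[of l] N[of N] that by linarith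
    then show ?thesis
      using \<open>\<epsilon> > 0\<close> by (simp add: power_less_imp_less_base)
  qed
  then show "\<exists>N. \<forall>k\<ge>N. \<forall>l\<ge>N. norm (\<eta> k - \<eta> l) < \<epsilon>"
    by blast
qed

lemma nested_inf_norms_converge:
  fixes C :: "nat \<Rightarrow> 'a::real_normed_vector set"
  assumes "decseq C" and bounded: "\<And>k. \<exists>x\<in>C k. norm x \<le> \<rho>"
  obtains M where "(\<lambda>k. Inf (norm ` C k)) \<longlonglongrightarrow> M" and "M \<le> \<rho>"
proof -
  define m where "m k = Inf (norm ` C k)" for k
  have bdd: "bdd_below (norm ` C k)" for k
    by (rule bdd_belowI[of _ 0]) auto
  have ne: "C k \<noteq> {}" for k
    using bounded by blast
  have "m k \<le> \<rho>" for k
    using bounded[of k] bdd unfolding m_def by (meson cInf_lower2 imageI)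
  moreover have "incseq m"
    unfolding m_def using \<open>decseq C\<close> ne bdd
    by (auto simp: incseq_def decseq_def intro!: cInf_superset_mono)
  ultimately have "m \<longlonglongrightarrow> Sup (range m)" and "Sup (range m) \<le> \<rho>"
    by (auto intro!: LIMSEQ_incseq_SUP cSUP_least simp: bdd_above_def) blast
  with that show ?thesis
    unfolding m_def by blast
qed

lemma nested_convex_near_minimizers_converge:
  fixes C :: "nat \<Rightarrow> 'a::{real_inner, complete_space} set"
  assumes "decseq C" and convex: "\<And>k. convex (C k)" and bounded: "\<And>k. \<exists>x\<in>C k. norm x \<le> \<rho>"
  obtains \<eta> \<eta>\<^sub>0 where "\<And>k. \<eta> k \<in> C k" "\<eta> \<longlonglongrightarrow> \<eta>\<^sub>0" "norm \<eta>\<^sub>0 \<le> \<rho>"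
proof -
  define m where "m k = Inf (norm ` C k)" for k
  obtain M where m_lim: "m \<longlonglongrightarrow> M" and "M \<le> \<rho>"
    using nested_inf_norms_converge[OF assms(1) bounded] unfolding m_def by blast
  have bdd: "bdd_below (norm ` C k)" for k
    by (rule bdd_belowI[of _ 0]) auto
  have lower: "m k \<le> norm x" if "x \<in> C k" for k x
    unfolding m_def using that bdd by (intro cInf_lower) auto
  have m_nonneg: "0 \<le> m k" for k
    unfolding m_def using bounded by (auto intro!: cInf_greatest)
  have "\<exists>x\<in>C k. norm x < m k + inverse (real (Suc k))" for k
    using cInf_less_iff[of "norm ` C k" "m k + inverse (real (Suc k))"] bounded[of k] bdd
    unfolding m_def by force
  then obtain \<eta> where \<eta>: "\<And>k. \<eta> k \<in> C k" "\<And>k. norm (\<eta> k) < m k + inverse (real (Suc k))"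
    by metis
  have norm_lim: "(\<lambda>k. norm (\<eta> k)) \<longlonglongrightarrow> M"
  proof (rule tendsto_sandwich)
    show "\<forall>\<^sub>F k in sequentially. m k \<le> norm (\<eta> k)"
      using lower \<eta>(1) by simp
    show "\<forall>\<^sub>F k in sequentially. norm (\<eta> k) \<le> m k + inverse (real (Suc k))"
      using \<eta>(2) by (simp add: less_imp_le)
    show "(\<lambda>k. m k + inverse (real (Suc k))) \<longlonglongrightarrow> M"
      using tendsto_add[OF m_lim LIMSEQ_inverse_real_of_nat] by simp
  qed fact
  have "Cauchy \<eta>"
    using \<open>decseq C\<close> convex \<eta>(1) lower m_nonneg m_lim norm_lim
    by (rule Cauchy_of_nested_convex_near_minimizers)
  then obtain \<eta>\<^sub>0 where "\<eta> \<longlonglongrightarrow> \<eta>\<^sub>0"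
    using Cauchy_convergent_iff convergent_def by blast
  moreover have "norm \<eta>\<^sub>0 = M"
    using tendsto_norm[OF \<open>\<eta> \<longlonglongrightarrow> \<eta>\<^sub>0\<close>] norm_lim by (rule LIMSEQ_unique)
  ultimately show ?thesis
    using that[OF \<eta>(1)] \<open>M \<le> \<rho>\<close> by simp
qed

section \<open>Subgradients and approximate subgradients\<close>

lemma subdiff_imp_finite:
  assumes "proper_functional J" and "\<zeta> \<in> subdiff J x"
  shows "J x = ereal (real_of_ereal (J x))"
proof -
  obtain y where "J y < \<infinity>"
    using assms(1) unfolding proper_functional_def by blast
  moreover have "J x + ereal (inner \<zeta> (y - x)) \<le> J y"
    using assms(2) unfolding subdiff_def by blast
  ultimately have "J x \<noteq> \<infinity>"
    by auto
  moreover have "J x \<noteq> -\<infinity>"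
    using assms(1) unfolding proper_functional_def by blast
  ultimately show ?thesis
    by (cases "J x") auto
qed

lemma subdiff_real_ineq:
  assumes "proper_functional J" and "\<zeta> \<in> subdiff J x"
  shows "ereal (real_of_ereal (J x) + inner \<zeta> (v - x)) \<le> J v"
proof -
  have "J x + ereal (inner \<zeta> (v - x)) \<le> J v"
    using assms(2) unfolding subdiff_def by blast
  then show ?thesis
    using subdiff_imp_finite[OF assms] by (metis plus_ereal.simps(1))
qed

lemma subdiff_Euler_identity:
  assumes "abs_p_homogeneous p J" and "proper_functional J" and "\<zeta> \<in> subdiff J x"
  shows "inner \<zeta> x = p * real_of_ereal (J x)"
proof -
  define r where "r = real_of_ereal (J x)"
  define \<phi> where "\<phi> c = c powr p * r - (c - 1) * inner \<zeta> x" for c :: real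
  have "\<phi> 1 \<le> \<phi> c" if "c > 0" for c
  proof -
    have "J (c *\<^sub>R x) = ereal (c powr p * r)"
      using assms(1) subdiff_imp_finite[OF assms(2,3)] \<open>c > 0\<close>
      unfolding abs_p_homogeneous_def r_def by (metis abs_of_pos less_irrefl times_ereal.simps(1))
    then have "r + inner \<zeta> (c *\<^sub>R x - x) \<le> c powr p * r"
      using subdiff_real_ineq[OF assms(2,3), of "c *\<^sub>R x"] unfolding r_def by simp
    then show ?thesis
      by (simp add: \<phi>_def algebra_simps)
  qed
  moreover have "(\<phi> has_real_derivative p * 1 powr (p - 1) * r - 1 * inner \<zeta> x) (at 1)"
    unfolding \<phi>_def
    by (intro derivative_eq_intros has_real_derivative_powr[THEN DERIV_chain2] | simp)+
  ultimately have "p * 1 powr (p - 1) * r - 1 * inner \<zeta> x = 0"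
    by (intro DERIV_local_min[of _ _ 1 1]) auto
  then show ?thesis
    by (simp add: r_def)
qed

lemma abs_p_homogeneous_convex_nonneg:
  assumes "abs_p_homogeneous p J" and "convex_functional J" and "proper_functional J"
  shows "0 \<le> J x"
proof -
  have "J (- x) = J x"
    using assms(1) unfolding abs_p_homogeneous_def by (elim conjE allE[of _ "-1"] allE[of _ x]) simp
  moreover have "J ((1 - 1/2) *\<^sub>R x + (1/2) *\<^sub>R (- x)) \<le> ereal (1 - 1/2) * J x + ereal (1/2) * J (- x)"
    using assms(2) unfolding convex_functional_def
    by (elim allE[of _ x] allE[of _ "- x"] allE[of _ "1/2"]) simp
  ultimately have "J 0 \<le> ereal (1/2) * J x + ereal (1/2) * J x"
    by simp
  moreover have "J 0 = 0" "J x \<noteq> -\<infinity>"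
    using assms(1,3) unfolding abs_p_homogeneous_def proper_functional_def by auto
  ultimately show ?thesis
    by (cases "J x") auto
qed

definition approx_subdiff :: "('a::real_inner \<Rightarrow> ereal) \<Rightarrow> 'a \<Rightarrow> real \<Rightarrow> 'a set" where
  "approx_subdiff J x e = {\<xi>. \<forall>v. J x + ereal (inner \<xi> (v - x) - e) \<le> J v}"

lemma approx_subdiff_mono:
  assumes "e \<le> e'"
  shows "approx_subdiff J x e \<subseteq> approx_subdiff J x e'"
proof -
  have "J x + ereal (inner \<xi> (v - x) - e') \<le> J x + ereal (inner \<xi> (v - x) - e)" for \<xi> v
    using assms by (intro add_left_mono) simp
  then show ?thesis
    unfolding approx_subdiff_def by (blast intro: order_trans)
qed

lemma subdiff_subset_approx_subdiff:
  assumes "0 \<le> e"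
  shows "subdiff J x \<subseteq> approx_subdiff J x e"
proof
  fix \<zeta> assume "\<zeta> \<in> subdiff J x"
  have "J x + ereal (inner \<zeta> (v - x) - e) \<le> J x + ereal (inner \<zeta> (v - x))" for v
    using assms by (intro add_left_mono) simp
  then show "\<zeta> \<in> approx_subdiff J x e"
    using \<open>\<zeta> \<in> subdiff J x\<close> unfolding subdiff_def approx_subdiff_def by (blast intro: order_trans)
qed

lemma convex_approx_subdiff: "convex (approx_subdiff J x e)"
proof (rule convexI)
  fix \<xi>\<^sub>1 \<xi>\<^sub>2 and a b :: real
  assume \<xi>: "\<xi>\<^sub>1 \<in> approx_subdiff J x e" "\<xi>\<^sub>2 \<in> approx_subdiff J x e"
    and "0 \<le> a" "0 \<le> b" "a + b = 1"
  show "a *\<^sub>R \<xi>\<^sub>1 + b *\<^sub>R \<xi>\<^sub>2 \<in> approx_subdiff J x e"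
    unfolding approx_subdiff_def
  proof (intro CollectI allI)
    fix v
    define s where "s \<xi> = inner \<xi> (v - x) - e" for \<xi>
    have "s (a *\<^sub>R \<xi>\<^sub>1 + b *\<^sub>R \<xi>\<^sub>2) = a * s \<xi>\<^sub>1 + b * s \<xi>\<^sub>2 + (a + b - 1) * e"
      by (simp add: s_def algebra_simps)
    also have "\<dots> = a * s \<xi>\<^sub>1 + b * s \<xi>\<^sub>2"
      using \<open>a + b = 1\<close> by simp
    also have "\<dots> \<le> max (s \<xi>\<^sub>1) (s \<xi>\<^sub>2)"
      using \<open>0 \<le> a\<close> \<open>0 \<le> b\<close> \<open>a + b = 1\<close> by (intro convex_bound_le) auto
    finally have "s (a *\<^sub>R \<xi>\<^sub>1 + b *\<^sub>R \<xi>\<^sub>2) \<le> s \<xi>\<^sub>1 \<or> s (a *\<^sub>R \<xi>\<^sub>1 + b *\<^sub>R \<xi>\<^sub>2) \<le> s \<xi>\<^sub>2"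
      by (rule le_max_iff_disj[THEN iffD1])
    moreover have "J x + ereal (s \<xi>\<^sub>1) \<le> J v" "J x + ereal (s \<xi>\<^sub>2) \<le> J v"
      using \<xi> unfolding approx_subdiff_def s_def by blast+
    ultimately have "J x + ereal (s (a *\<^sub>R \<xi>\<^sub>1 + b *\<^sub>R \<xi>\<^sub>2)) \<le> J v"
      by (metis add_left_mono ereal_less_eq(3) order_trans)
    then show "J x + ereal (inner (a *\<^sub>R \<xi>\<^sub>1 + b *\<^sub>R \<xi>\<^sub>2) (v - x) - e) \<le> J v"
      by (simp add: s_def)
  qed
qed

lemma approx_subdiff_limit_in_subdiff:
  assumes "\<And>k. \<eta> k \<in> approx_subdiff J x (e k)" and "\<eta> \<longlonglongrightarrow> \<eta>\<^sub>0" and "e \<longlonglongrightarrow> 0"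
  shows "\<eta>\<^sub>0 \<in> subdiff J x"
  unfolding subdiff_def
proof (intro CollectI allI)
  fix v
  have "(\<lambda>k. J x + ereal (inner (\<eta> k) (v - x) - e k)) \<longlonglongrightarrow> J x + ereal (inner \<eta>\<^sub>0 (v - x) - 0)"
    by (intro tendsto_add_ereal_general1 tendsto_const tendsto_ereal tendsto_intros assms) simp
  then show "J x + ereal (inner \<eta>\<^sub>0 (v - x)) \<le> J v"
    using assms(1) by (auto intro!: LIMSEQ_le_const2 simp: approx_subdiff_def)
qed

lemma approx_subdiff_norm_lower_bound:
  fixes J :: "'a::{real_inner, complete_space} \<Rightarrow> ereal"
  assumes "min_norm_subgrad J x \<zeta>" and "\<rho> < norm \<zeta>"
  shows "\<exists>e>0. \<forall>\<xi>\<in>approx_subdiff J x e. \<rho> \<le> norm \<xi>"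
proof (rule ccontr)
  define C where "C k = approx_subdiff J x (inverse (real (Suc k)))" for k
  assume contra: "\<not> ?thesis"
  have "decseq C"
    unfolding decseq_def C_def
    by (intro allI impI approx_subdiff_mono) (simp add: le_imp_inverse_le)
  moreover have "convex (C k)" for k
    unfolding C_def by (rule convex_approx_subdiff)
  moreover have "\<exists>\<xi>\<in>C k. norm \<xi> \<le> \<rho>" for k
  proof -
    have "inverse (real (Suc k)) > 0"
      by simp
    then obtain \<xi> where "\<xi> \<in> C k" "\<not> \<rho> \<le> norm \<xi>"
      using contra unfolding C_def by blast
    then show ?thesis
      by force
  qed
  ultimately obtain \<eta> \<eta>\<^sub>0 where \<eta>: "\<And>k. \<eta> k \<in> C k" "\<eta> \<longlonglongrightarrow> \<eta>\<^sub>0" "norm \<eta>\<^sub>0 \<le> \<rho>"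
    by (rule nested_convex_near_minimizers_converge) blast
  have "\<eta>\<^sub>0 \<in> subdiff J x"
    using \<eta>(1) unfolding C_def by (rule approx_subdiff_limit_in_subdiff[OF _ \<eta>(2) LIMSEQ_inverse_real_of_nat])
  then have "norm \<zeta> \<le> norm \<eta>\<^sub>0"
    using assms(1) by (simp add: min_norm_subgrad_def)
  with \<eta>(3) \<open>\<rho> < norm \<zeta>\<close> show False
    by simp
qed

section \<open>Minimal-norm gradient flows\<close>

locale min_norm_flow =
  fixes J :: "'a::{real_inner, complete_space} \<Rightarrow> ereal" and u z :: "real \<Rightarrow> 'a"
  assumes proper: "proper_functional J"
    and continuous_u: "continuous_on {0..} u"
    and min_norm: "\<And>t. t > 0 \<Longrightarrow> min_norm_subgrad J (u t) (z t)"
    and right_deriv_u: "\<And>t. t > 0 \<Longrightarrow> (u has_vector_derivative - z t) (at t within {t..})"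
begin

definition energy :: "real \<Rightarrow> real" where
  "energy t = real_of_ereal (J (u t))"

lemma z_subdiff: "t > 0 \<Longrightarrow> z t \<in> subdiff J (u t)"
  using min_norm unfolding min_norm_subgrad_def by blast

lemma J_u_eq_energy: "t > 0 \<Longrightarrow> J (u t) = ereal (energy t)"
  using subdiff_imp_finite[OF proper z_subdiff] unfolding energy_def .

lemma energy_subgradient_ineq:
  assumes "s > 0" and "t > 0"
  shows "energy t + inner (z t) (u s - u t) \<le> energy s"
proof -
  have "ereal (energy t + inner (z t) (u s - u t)) \<le> J (u s)"
    using subdiff_real_ineq[OF proper z_subdiff[OF \<open>t > 0\<close>]] unfolding energy_def .
  then show ?thesis
    using J_u_eq_energy[OF \<open>s > 0\<close>] by simp
qed

lemma z_u_monotone: "s > 0 \<Longrightarrow> t > 0 \<Longrightarrow> 0 \<le> inner (z s - z t) (u s - u t)"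
  using energy_subgradient_ineq[of s t] energy_subgradient_ineq[of t s]
  by (simp add: inner_diff_left inner_diff_right inner_commute)

lemma isCont_u: "t > 0 \<Longrightarrow> isCont u t"
  using continuous_on_interior[OF continuous_u, of t] by simp

lemma right_deriv_shifted_u:
  assumes "\<tau> > 0" and "h \<ge> 0"
  shows "((\<lambda>s. u (s + h)) has_vector_derivative - z (\<tau> + h)) (at \<tau> within {\<tau>..})"
proof -
  have "(\<lambda>s. s + h) ` {\<tau>..} = {\<tau> + h..}"
    using image_add_atLeast[of h \<tau>] by (simp add: add.commute)
  moreover have "((\<lambda>s. s + h) has_vector_derivative 1) (at \<tau> within {\<tau>..})"
    by (auto intro!: derivative_eq_intros simp flip: has_real_derivative_iff_has_vector_derivative)
  ultimately have "(u \<circ> (\<lambda>s. s + h) has_vector_derivative 1 *\<^sub>R - z (\<tau> + h)) (at \<tau> within {\<tau>..})"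
    using right_deriv_u[of "\<tau> + h"] assms by (intro vector_diff_chain_within) auto
  then show ?thesis
    by (simp add: o_def)
qed

lemma norm_increment_antimono:
  assumes "h > 0" and "0 < s" and "s \<le> t"
  shows "norm (u (t + h) - u t) \<le> norm (u (s + h) - u s)"
proof -
  define g where "g \<tau> = (norm (u (\<tau> + h) - u \<tau>))\<^sup>2" for \<tau>
  have "continuous_on {s..t} u" "continuous_on {s + h..t + h} u"
    using assms by (auto intro: continuous_on_subset[OF continuous_u])
  then have "continuous_on {s..t} g"
    unfolding g_def
    by (auto intro!: continuous_intros continuous_on_compose2[of "{s + h..t + h}" u])
  then have "g t \<le> g s"
  proof (rule right_deriv_nonpos_imp_le[OF \<open>s \<le> t\<close>])
    fix \<tau> assume "\<tau> \<in> {s..<t}"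
    then have "\<tau> > 0"
      using assms by auto
    have "((\<lambda>\<tau>. u (\<tau> + h) - u \<tau>) has_vector_derivative - z (\<tau> + h) - - z \<tau>) (at \<tau> within {\<tau>..})"
      using right_deriv_shifted_u[OF \<open>\<tau> > 0\<close>, of h] right_deriv_u[OF \<open>\<tau> > 0\<close>] \<open>h > 0\<close>
      by (intro derivative_intros) auto
    then show "(g has_real_derivative 2 * inner (u (\<tau> + h) - u \<tau>) (- z (\<tau> + h) - - z \<tau>))
        (at \<tau> within {\<tau>..})"
      unfolding g_def by (rule has_real_derivative_norm_power2)
    show "2 * inner (u (\<tau> + h) - u \<tau>) (- z (\<tau> + h) - - z \<tau>) \<le> 0"
      using z_u_monotone[of "\<tau> + h" \<tau>] \<open>\<tau> > 0\<close> \<open>h > 0\<close>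
      by (simp add: inner_commute inner_diff_left inner_diff_right)
  qed
  then show ?thesis
    by (simp add: g_def)
qed

lemma norm_increment_quotient_tendsto:
  assumes "t > 0"
  shows "((\<lambda>h. norm (u (t + h) - u t) / h) \<longlongrightarrow> norm (z t)) (at_right 0)"
proof -
  have "((\<lambda>s. (u s - u t) /\<^sub>R (s - t)) \<longlongrightarrow> - z t) (at_right t)"
    using has_vector_derivative_imp_quotient_tendsto[OF right_deriv_u[OF assms]]
    by (simp add: at_within_Ici_at_right)
  then have "((\<lambda>h. norm ((u (t + h) - u t) /\<^sub>R h)) \<longlongrightarrow> norm (- z t)) (at_right 0)"
    unfolding filterlim_at_right_to_0[of _ _ t] by (intro tendsto_norm) (simp add: add.commute)
  moreover have "\<forall>\<^sub>F h in at_right 0. norm ((u (t + h) - u t) /\<^sub>R h) = norm (u (t + h) - u t) / h"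
    using eventually_at_right_less[of 0] by eventually_elim (simp add: divide_inverse_commute)
  ultimately show ?thesis
    by (simp add: Lim_transform_eventually)
qed

lemma norm_z_antimono:
  assumes "0 < s" and "s \<le> t"
  shows "norm (z t) \<le> norm (z s)"
proof (rule tendsto_le[OF trivial_limit_at_right_real])
  show "((\<lambda>h. norm (u (t + h) - u t) / h) \<longlongrightarrow> norm (z t)) (at_right 0)"
    "((\<lambda>h. norm (u (s + h) - u s) / h) \<longlongrightarrow> norm (z s)) (at_right 0)"
    using assms by (auto intro!: norm_increment_quotient_tendsto)
  show "\<forall>\<^sub>F h in at_right 0. norm (u (t + h) - u t) / h \<le> norm (u (s + h) - u s) / h"
    using eventually_at_right_less[of 0]
    by eventually_elim (use assms in \<open>auto intro!: divide_right_mono norm_increment_antimono\<close>)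
qed

lemma countable_discont_norm_z: "countable {t \<in> {0<..}. \<not> isCont (\<lambda>s. norm (z s)) t}"
proof -
  have "mono_on {0<..} (\<lambda>s. - norm (z s))"
    by (auto intro!: mono_onI norm_z_antimono)
  then have "countable {t \<in> {0<..}. \<not> isCont (\<lambda>s. - norm (z s)) t}"
    by (rule mono_on_ctble_discont_open[OF open_greaterThan])
  moreover have "isCont (\<lambda>s. - norm (z s)) t \<longleftrightarrow> isCont (\<lambda>s. norm (z s)) t" for t
    using isCont_minus[of t "\<lambda>s. - norm (z s)"] isCont_minus[of t "\<lambda>s. norm (z s)"] by auto
  ultimately show ?thesis
    by simp
qed

lemma energy_diff_bound:
  assumes "s > 0" and "t > 0"
  shows "\<bar>energy s - energy t\<bar> \<le> max (norm (z s)) (norm (z t)) * norm (u s - u t)"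
proof -
  have "energy s - energy t \<le> norm (z s) * norm (u s - u t)"
    using energy_subgradient_ineq[OF assms(2,1)] norm_cauchy_schwarz[of "z s" "u s - u t"]
    by (simp add: inner_diff_right)
  moreover have "energy t - energy s \<le> norm (z t) * norm (u s - u t)"
    using energy_subgradient_ineq[OF assms] norm_cauchy_schwarz[of "z t" "u t - u s"]
    by (simp add: inner_diff_right norm_minus_commute)
  moreover have "norm (z s) * norm (u s - u t) \<le> max (norm (z s)) (norm (z t)) * norm (u s - u t)"
    "norm (z t) * norm (u s - u t) \<le> max (norm (z s)) (norm (z t)) * norm (u s - u t)"
    by (auto intro: mult_right_mono)
  ultimately show ?thesis
    by linarith
qed

lemma isCont_energy:
  assumes "t > 0"
  shows "isCont energy t"
proof -
  have "((\<lambda>s. energy s - energy t) \<longlongrightarrow> 0) (at t)"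
  proof (rule Lim_null_comparison)
    have "\<forall>\<^sub>F s in at t. t / 2 < s"
      using assms by (intro order_tendstoD(1)[OF tendsto_ident_at]) auto
    then show "\<forall>\<^sub>F s in at t. norm (energy s - energy t) \<le> norm (z (t / 2)) * norm (u s - u t)"
    proof eventually_elim
      case (elim s)
      then have "max (norm (z s)) (norm (z t)) \<le> norm (z (t / 2))"
        using assms by (auto intro: norm_z_antimono)
      then have "max (norm (z s)) (norm (z t)) * norm (u s - u t) \<le> norm (z (t / 2)) * norm (u s - u t)"
        by (rule mult_right_mono) simp
      then show ?case
        using energy_diff_bound[of s t] elim assms by simp
    qed
    have "((\<lambda>s. u s - u t) \<longlongrightarrow> 0) (at t)"
      using isCont_u[OF assms] unfolding isCont_def by (subst Lim_null[symmetric])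
    then show "((\<lambda>s. norm (z (t / 2)) * norm (u s - u t)) \<longlongrightarrow> 0) (at t)"
      by (auto intro: tendsto_mult_right_zero tendsto_norm_zero)
  qed
  then show ?thesis
    unfolding isCont_def by (subst Lim_null)
qed

lemma z_in_approx_subdiff:
  assumes "0 < t" and "t < s"
  shows "z s \<in> approx_subdiff J (u t) (2 * norm (z t) * norm (u s - u t))"
  unfolding approx_subdiff_def
proof (intro CollectI allI)
  fix v
  define N \<delta> where "N = norm (z t)" and "\<delta> = norm (u s - u t)"
  have "energy t - N * \<delta> \<le> energy s"
    using energy_subgradient_ineq[of s t] Cauchy_Schwarz_ineq2[of "z t" "u s - u t"] assms
    by (simp add: N_def \<delta>_def abs_le_iff)
  moreover have "inner (z s) (u s - u t) \<le> N * \<delta>"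
    using norm_cauchy_schwarz[of "z s" "u s - u t"] norm_z_antimono[of t s] assms
    by (simp add: N_def \<delta>_def) (meson mult_right_mono norm_ge_zero order_trans)
  ultimately have "energy t + inner (z s) (v - u t) - 2 * N * \<delta> \<le> energy s + inner (z s) (v - u s)"
    by (simp add: inner_diff_right algebra_simps)
  then have "J (u t) + ereal (inner (z s) (v - u t) - 2 * N * \<delta>) \<le> ereal (energy s + inner (z s) (v - u s))"
    using J_u_eq_energy[of t] assms by simp
  also have "\<dots> \<le> J v"
    using subdiff_real_ineq[OF proper z_subdiff[of s]] assms by (simp add: energy_def)
  finally show "J (u t) + ereal (inner (z s) (v - u t) - 2 * norm (z t) * norm (u s - u t)) \<le> J v"
    by (simp add: N_def \<delta>_def)
qed

lemma midpoint_norm_eventually_ge: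
  assumes "t > 0" and "\<rho> < norm (z t)"
  shows "\<forall>\<^sub>F s in at_right t. \<rho> \<le> norm ((1/2) *\<^sub>R (z s + z t))"
proof -
  obtain e where "e > 0" and e: "\<And>\<xi>. \<xi> \<in> approx_subdiff J (u t) e \<Longrightarrow> \<rho> \<le> norm \<xi>"
    using approx_subdiff_norm_lower_bound[OF min_norm[OF assms(1)] assms(2)] by blast
  have "((\<lambda>s. 2 * norm (z t) * norm (u s - u t)) \<longlongrightarrow> 2 * norm (z t) * norm (u t - u t)) (at_right t)"
    using isCont_u[OF assms(1)] unfolding isCont_def
    by (intro tendsto_intros) (simp add: filterlim_at_split)
  then have "\<forall>\<^sub>F s in at_right t. 2 * norm (z t) * norm (u s - u t) < e"
    using \<open>e > 0\<close> by (intro order_tendstoD(2)) auto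
  then show ?thesis
    using eventually_at_right_less[of t]
  proof eventually_elim
    case (elim s)
    then have "z s \<in> approx_subdiff J (u t) e"
      using approx_subdiff_mono[OF less_imp_le[OF elim(1)]] z_in_approx_subdiff[OF assms(1) elim(2)]
      by blast
    moreover have "z t \<in> approx_subdiff J (u t) e"
      using subdiff_subset_approx_subdiff[of e] z_subdiff[OF assms(1)] \<open>e > 0\<close> by force
    ultimately have "(1/2) *\<^sub>R z s + (1/2) *\<^sub>R z t \<in> approx_subdiff J (u t) e"
      by (intro convexD[OF convex_approx_subdiff]) auto
    then show ?case
      by (intro e) (simp add: scaleR_add_right)
  qed
qed

lemma eventually_norm_z_le:
  assumes "t > 0"
  shows "\<forall>\<^sub>F s in at_right t. norm (z s) \<le> norm (z t)"
  using eventually_at_right_less[of t]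
  by eventually_elim (use assms in \<open>auto intro: norm_z_antimono\<close>)

lemma eventually_norm_z_diff_le:
  assumes "t > 0" and "0 \<le> \<rho>" and "\<rho> < norm (z t)"
  shows "\<forall>\<^sub>F s in at_right t. (norm (z s - z t))\<^sup>2 \<le> 4 * ((norm (z t))\<^sup>2 - \<rho>\<^sup>2)"
  using eventually_norm_z_le[OF assms(1)] midpoint_norm_eventually_ge[OF assms(1,3)]
proof eventually_elim
  case (elim s)
  then have "(norm (z s - z t))\<^sup>2 \<le> 2 * (norm (z t))\<^sup>2 + 2 * (norm (z t))\<^sup>2 - 4 * \<rho>\<^sup>2"
    unfolding parallelogram_midpoint using assms(2)
    by (intro diff_mono add_mono mult_left_mono power_mono) auto
  then show ?case
    by simp
qed

lemma z_right_continuous: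
  assumes "t > 0"
  shows "(z \<longlongrightarrow> z t) (at_right t)"
proof (rule tendstoI)
  fix \<epsilon> :: real assume "\<epsilon> > 0"
  define N where "N = norm (z t)"
  have "\<forall>\<^sub>F s in at_right t. (norm (z s - z t))\<^sup>2 < \<epsilon>\<^sup>2"
  proof (cases "4 * N\<^sup>2 < \<epsilon>\<^sup>2")
    case True
    from eventually_norm_z_le[OF assms] show ?thesis
    proof eventually_elim
      case (elim s)
      then have "norm (z s - z t) \<le> 2 * N"
        using norm_triangle_ineq4[of "z s" "z t"] by (simp add: N_def)
      then have "(norm (z s - z t))\<^sup>2 \<le> (2 * N)\<^sup>2"
        by (intro power_mono) auto
      with True show ?case
        by (simp add: power_mult_distrib)
    qed
  next
    case False
    define \<rho> where "\<rho> = sqrt (N\<^sup>2 - \<epsilon>\<^sup>2 / 8)"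
    have "\<epsilon>\<^sup>2 / 8 \<le> N\<^sup>2"
      using False zero_le_power2[of N] by linarith
    then have "\<rho>\<^sup>2 = N\<^sup>2 - \<epsilon>\<^sup>2 / 8" "0 \<le> \<rho>"
      by (simp_all add: \<rho>_def)
    moreover have "\<rho> < N"
      using \<open>\<epsilon> > 0\<close> by (simp add: \<rho>_def N_def real_sqrt_less_iff real_less_lsqrt)
    ultimately have "\<forall>\<^sub>F s in at_right t. (norm (z s - z t))\<^sup>2 \<le> \<epsilon>\<^sup>2 / 2"
      using eventually_norm_z_diff_le[OF assms, of \<rho>] by (simp add: N_def)
    moreover have "0 < \<epsilon>\<^sup>2"
      using \<open>\<epsilon> > 0\<close> by simp
    ultimately show ?thesis
      by (elim eventually_mono) linarith
  qed
  then show "\<forall>\<^sub>F s in at_right t. dist (z s) (z t) < \<epsilon>"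
    by eventually_elim (use \<open>\<epsilon> > 0\<close> in \<open>simp add: dist_norm power_less_imp_less_base\<close>)
qed

lemma energy_right_deriv:
  assumes "t > 0"
  shows "(energy has_real_derivative - (norm (z t))\<^sup>2) (at t within {t..})"
  unfolding has_field_derivative_iff at_within_Ici_at_right
proof (rule tendsto_sandwich)
  define d where "d s = (u s - u t) /\<^sub>R (s - t)" for s
  have d: "(d \<longlongrightarrow> - z t) (at_right t)"
    unfolding d_def using has_vector_derivative_imp_quotient_tendsto[OF right_deriv_u[OF assms]]
    by (simp add: at_within_Ici_at_right)
  show "\<forall>\<^sub>F s in at_right t. inner (z t) (d s) \<le> (energy s - energy t) / (s - t)"
    using eventually_at_right_less[of t]
  proof eventually_elim
    case (elim s)
    have "inner (z t) (d s) = inner (z t) (u s - u t) / (s - t)"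
      by (simp add: d_def divide_inverse mult.commute)
    then show ?case
      using energy_subgradient_ineq[of s t] assms elim
        divide_right_mono[of "inner (z t) (u s - u t)" "energy s - energy t" "s - t"]
      by simp
  qed
  show "\<forall>\<^sub>F s in at_right t. (energy s - energy t) / (s - t) \<le> inner (z s) (d s)"
    using eventually_at_right_less[of t]
  proof eventually_elim
    case (elim s)
    have "inner (z s) (d s) = inner (z s) (u s - u t) / (s - t)"
      by (simp add: d_def divide_inverse mult.commute)
    then show ?case
      using energy_subgradient_ineq[of t s] assms elim
        divide_right_mono[of "energy s - energy t" "inner (z s) (u s - u t)" "s - t"]
      by (simp add: inner_diff_right)
  qed
  show "((\<lambda>s. inner (z t) (d s)) \<longlongrightarrow> - (norm (z t))\<^sup>2) (at_right t)"
    using tendsto_inner[OF tendsto_const d, of "z t"] by (simp add: power2_norm_eq_inner)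
  show "((\<lambda>s. inner (z s) (d s)) \<longlongrightarrow> - (norm (z t))\<^sup>2) (at_right t)"
    using tendsto_inner[OF z_right_continuous[OF assms] d] by (simp add: power2_norm_eq_inner)
qed

end

lemma gradient_flow_imp_min_norm_flow:
  assumes "proper_functional J" and "gradient_flow J f u"
  obtains z where "min_norm_flow J u z"
proof -
  have "\<forall>t. \<exists>\<zeta>. t > 0 \<longrightarrow> min_norm_subgrad J (u t) \<zeta> \<and> (u has_vector_derivative - \<zeta>) (at t within {t..})"
    using assms(2) unfolding gradient_flow_def by blast
  then obtain z where "\<And>t. t > 0 \<Longrightarrow>
      min_norm_subgrad J (u t) (z t) \<and> (u has_vector_derivative - z t) (at t within {t..})"
    by metis
  with assms show ?thesis
    using that unfolding gradient_flow_def min_norm_flow_def by blast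
qed

section \<open>The Rayleigh quotient along the flow\<close>

locale homogeneous_min_norm_flow = min_norm_flow +
  fixes p :: real
  assumes p_pos: "0 < p"
    and convex: "convex_functional J"
    and homogeneous: "abs_p_homogeneous p J"
begin

lemma inner_z_u_eq: "t > 0 \<Longrightarrow> inner (z t) (u t) = p * energy t"
  using subdiff_Euler_identity[OF homogeneous proper z_subdiff] unfolding energy_def .

lemma energy_nonneg: "0 \<le> energy t"
  using abs_p_homogeneous_convex_nonneg[OF homogeneous convex proper, of "u t"]
  unfolding energy_def by (simp add: real_of_ereal_pos)

lemma norm_u_power2_right_deriv:
  assumes "t > 0"
  shows "((\<lambda>s. (norm (u s))\<^sup>2) has_real_derivative - 2 * p * energy t) (at t within {t..})"
  using has_real_derivative_norm_power2[OF right_deriv_u[OF assms]] inner_z_u_eq[OF assms]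
  by (simp add: inner_commute mult.assoc)

lemma u_eq_0_persists:
  assumes "0 < s" and "s \<le> s'" and "u s = 0"
  shows "u s' = 0"
proof -
  have "continuous_on {s..s'} (\<lambda>s. (norm (u s))\<^sup>2)"
    using continuous_on_subset[OF continuous_u] assms(1) by (auto intro!: continuous_intros)
  then have "(norm (u s'))\<^sup>2 \<le> (norm (u s))\<^sup>2"
  proof (rule right_deriv_nonpos_imp_le[OF \<open>s \<le> s'\<close>])
    fix \<tau> assume "\<tau> \<in> {s..<s'}"
    then show "((\<lambda>s. (norm (u s))\<^sup>2) has_real_derivative - 2 * p * energy \<tau>) (at \<tau> within {\<tau>..})"
      "- 2 * p * energy \<tau> \<le> 0"
      using assms(1) norm_u_power2_right_deriv[of \<tau>] energy_nonneg[of \<tau>] p_pos by auto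
  qed
  with \<open>u s = 0\<close> show ?thesis
    by simp
qed

lemma u_nonzero_before_extinction:
  assumes "0 < t" and "ereal t < T_ex u"
  shows "u t \<noteq> 0"
proof
  assume "u t = 0"
  then have "T_ex u \<le> ereal t"
    unfolding T_ex_def using assms(1) u_eq_0_persists by (intro Inf_lower) auto
  with assms(2) show False
    by simp
qed

(* p * energy t stands for the equal inner (z t) (u t), which need not be continuous in t *)
definition rayleigh_deriv :: "real \<Rightarrow> real" where
  "rayleigh_deriv t = p * ((p * energy t)\<^sup>2 - (norm (z t))\<^sup>2 * (norm (u t))\<^sup>2) / norm (u t) powr (p + 2)"

lemma rayleigh_u_eq: "rayleigh p J (u t) = p * energy t / norm (u t) powr p"
  by (simp add: rayleigh_def energy_def)

lemma norm_u_powr_right_deriv: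
  assumes "t > 0" and "u t \<noteq> 0"
  shows "((\<lambda>s. norm (u s) powr p) has_real_derivative
    - p\<^sup>2 * energy t * norm (u t) powr p / (norm (u t))\<^sup>2) (at t within {t..})"
proof -
  define n where "n = norm (u t)"
  have "n > 0"
    using assms(2) by (simp add: n_def)
  have "((\<lambda>s. ((norm (u s))\<^sup>2) powr (p / 2)) has_real_derivative
      (p / 2) * (n\<^sup>2) powr (p / 2 - 1) * (- 2 * p * energy t)) (at t within {t..})"
    using DERIV_chain2[OF has_real_derivative_powr[of "(norm (u t))\<^sup>2" "p / 2"]
        norm_u_power2_right_deriv[OF assms(1)]] \<open>n > 0\<close>
    by (simp add: n_def)
  then have "((\<lambda>s. norm (u s) powr p) has_real_derivative
      (p / 2) * (n powr p / n\<^sup>2) * (- 2 * p * energy t)) (at t within {t..})"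
    by (simp only: power2_norm_powr[OF p_pos] power2_powr_half_minus_one[OF \<open>n > 0\<close>])
  then show ?thesis
    by (simp add: n_def field_simps power2_eq_square)
qed

lemma rayleigh_right_deriv:
  assumes "t > 0" and "u t \<noteq> 0"
  shows "((\<lambda>s. rayleigh p J (u s)) has_real_derivative rayleigh_deriv t) (at t within {t..})"
proof -
  define n where "n = norm (u t)"
  have "n > 0" "n powr p > 0" "n powr (p + 2) = n powr p * n\<^sup>2"
    using assms(2) by (simp_all add: n_def powr_add flip: powr_numeral)
  from DERIV_divide[OF DERIV_cmult[OF energy_right_deriv[OF assms(1)], of p] norm_u_powr_right_deriv[OF assms]]
  have "((\<lambda>s. rayleigh p J (u s)) has_real_derivative
      (p * - (norm (z t))\<^sup>2 * n powr p + p * energy t * (p\<^sup>2 * energy t * n powr p / n\<^sup>2))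
        / (n powr p * n powr p)) (at t within {t..})"
    using \<open>n > 0\<close> by (simp add: rayleigh_u_eq[abs_def] n_def)
  also have "(p * - (norm (z t))\<^sup>2 * n powr p + p * energy t * (p\<^sup>2 * energy t * n powr p / n\<^sup>2))
      / (n powr p * n powr p) = rayleigh_deriv t"
    using \<open>n > 0\<close> \<open>n powr p > 0\<close> \<open>n powr (p + 2) = n powr p * n\<^sup>2\<close>
    by (simp add: rayleigh_deriv_def n_def field_simps power2_eq_square)
  finally show ?thesis .
qed

lemma rayleigh_deriv_nonpos:
  assumes "t > 0"
  shows "rayleigh_deriv t \<le> 0"
proof -
  have "(p * energy t)\<^sup>2 \<le> (norm (z t))\<^sup>2 * (norm (u t))\<^sup>2"
    using Cauchy_Schwarz_ineq[of "z t" "u t"] inner_z_u_eq[OF assms] by (simp add: power2_norm_eq_inner)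
  then show ?thesis
    unfolding rayleigh_deriv_def using p_pos by (simp add: mult_nonneg_nonpos divide_nonpos_nonneg)
qed

lemma rayleigh_deriv_eq_0_iff:
  assumes "t > 0" and "u t \<noteq> 0"
  shows "rayleigh_deriv t = 0 \<longleftrightarrow> (inner (z t) (u t))\<^sup>2 = (norm (z t))\<^sup>2 * (norm (u t))\<^sup>2"
  using assms p_pos by (simp add: rayleigh_deriv_def inner_z_u_eq)

lemma eigenfunction_iff:
  assumes "t > 0" and "u t \<noteq> 0"
  shows "eigenfunction p J (u t) (rayleigh p J (u t)) \<longleftrightarrow>
    (inner (z t) (u t))\<^sup>2 = (norm (z t))\<^sup>2 * (norm (u t))\<^sup>2"
proof -
  define n where "n = norm (u t)"
  have "n > 0"
    using assms(2) by (simp add: n_def)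
  have multiplier: "rayleigh p J (u t) * n powr (p - 2) = inner (z t) (u t) / n\<^sup>2"
    using \<open>n > 0\<close> by (simp add: rayleigh_u_eq inner_z_u_eq[OF assms(1)] n_def powr_diff field_simps
        flip: powr_numeral)
  have CS: "(inner (z t) (u t))\<^sup>2 \<le> (norm (z t))\<^sup>2 * n\<^sup>2"
    using Cauchy_Schwarz_ineq[of "z t" "u t"] by (simp add: n_def power2_norm_eq_inner)
  show ?thesis
    unfolding eigenfunction_def multiplier[unfolded n_def]
  proof safe
    assume "(inner (z t) (u t) / (norm (u t))\<^sup>2) *\<^sub>R u t \<in> subdiff J (u t)"
    then have "norm (z t) \<le> norm ((inner (z t) (u t) / n\<^sup>2) *\<^sub>R u t)"
      using min_norm[OF assms(1)] unfolding min_norm_subgrad_def n_def by blast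
    also have "\<dots> = \<bar>inner (z t) (u t)\<bar> / n"
      using \<open>n > 0\<close> by (simp add: n_def power2_eq_square)
    finally have "norm (z t) * n \<le> \<bar>inner (z t) (u t)\<bar>"
      using \<open>n > 0\<close> by (simp add: le_divide_eq)
    then have "(norm (z t) * n)\<^sup>2 \<le> (\<bar>inner (z t) (u t)\<bar>)\<^sup>2"
      using \<open>n > 0\<close> by (intro power_mono) auto
    then have "(norm (z t))\<^sup>2 * n\<^sup>2 \<le> (inner (z t) (u t))\<^sup>2"
      by (simp add: power_mult_distrib)
    with CS show "(inner (z t) (u t))\<^sup>2 = (norm (z t))\<^sup>2 * (norm (u t))\<^sup>2"
      by (simp add: n_def)
  next
    assume "(inner (z t) (u t))\<^sup>2 = (norm (z t))\<^sup>2 * (norm (u t))\<^sup>2"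
    then have "z t = (inner (z t) (u t) / (norm (u t))\<^sup>2) *\<^sub>R u t"
      by (rule Cauchy_Schwarz_eq_imp_parallel[OF assms(2)])
    then show "(inner (z t) (u t) / (norm (u t))\<^sup>2) *\<^sub>R u t \<in> subdiff J (u t)"
      using z_subdiff[OF assms(1)] by simp
  qed (use assms(2) in simp)
qed

lemma rayleigh_DERIV:
  assumes "t > 0" and "u t \<noteq> 0" and "isCont (\<lambda>s. norm (z s)) t"
  shows "((\<lambda>s. rayleigh p J (u s)) has_real_derivative rayleigh_deriv t) (at t)"
proof (rule DERIV_of_continuous_right_deriv)
  have "\<forall>\<^sub>F s in at t. 0 < s \<and> u s \<noteq> 0"
    using order_tendstoD(1)[OF tendsto_ident_at assms(1)]
      tendsto_imp_eventually_ne[OF isCont_u[OF assms(1), unfolded isCont_def] assms(2)]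
    by eventually_elim auto
  then have near: "\<forall>\<^sub>F s in nhds t. 0 < s \<and> u s \<noteq> 0"
    unfolding eventually_at_filter by eventually_elim (use assms(1,2) in auto)
  then show "\<forall>\<^sub>F s in nhds t. isCont (\<lambda>s. rayleigh p J (u s)) s"
    by eventually_elim (use p_pos in \<open>auto simp: rayleigh_u_eq intro!: continuous_intros isCont_energy
        isCont_o2[OF isCont_u]\<close>)
  from near show "\<forall>\<^sub>F s in nhds t. ((\<lambda>s. rayleigh p J (u s)) has_real_derivative rayleigh_deriv s)
      (at s within {s..})"
    by eventually_elim (auto intro: rayleigh_right_deriv)
  show "isCont rayleigh_deriv t"
    unfolding rayleigh_deriv_def[abs_def] using assms p_pos
    by (auto intro!: continuous_intros isCont_energy isCont_o2[OF isCont_u])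
qed

lemma AE_rayleigh_DERIV_nonpos:
  "AE t in lborel. 0 < t \<and> ereal t < T_ex u \<longrightarrow>
    (\<exists>D. ((\<lambda>s. rayleigh p J (u s)) has_real_derivative D) (at t) \<and> D \<le> 0)"
  using AE_not_in[OF countable_imp_null_set_lborel[OF countable_discont_norm_z]]
proof eventually_elim
  case (elim t)
  show ?case
  proof
    assume t: "0 < t \<and> ereal t < T_ex u"
    with elim have "u t \<noteq> 0" "isCont (\<lambda>s. norm (z s)) t"
      using u_nonzero_before_extinction by auto
    with t show "\<exists>D. ((\<lambda>s. rayleigh p J (u s)) has_real_derivative D) (at t) \<and> D \<le> 0"
      using rayleigh_DERIV rayleigh_deriv_nonpos by blast
  qed
qed

lemma rayleigh_DERIV_zero_iff_eigenfunction:
  assumes "0 < t" and "ereal t < T_ex u"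
  shows "((\<lambda>s. rayleigh p J (u s)) has_real_derivative 0) (at t) \<longleftrightarrow>
    eigenfunction p J (u t) (rayleigh p J (u t)) \<and> (\<lambda>s. rayleigh p J (u s)) differentiable (at t)"
  using DERIV_zero_iff_right_deriv_zero[OF rayleigh_right_deriv] rayleigh_deriv_eq_0_iff
    eigenfunction_iff u_nonzero_before_extinction assms
  by simp

end

theorem proposition4:
  fixes J :: "'a::{real_inner, complete_space} \<Rightarrow> ereal"
    and p :: real and f :: 'a and u :: "real \<Rightarrow> 'a"
  assumes p: "p \<ge> 1"
    and conv: "convex_functional J"
    and lsc: "lsc_functional J"
    and proper: "proper_functional J"
    and dense: "closure (eff_dom J) = UNIV"
    and hom: "abs_p_homogeneous p J"
    and coercive: "lambda1 p J > 0"
    and f: "f \<in> H0 J"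
    and flow: "gradient_flow J f u"
  shows "(AE t in lborel. 0 < t \<and> ereal t < T_ex u \<longrightarrow>
            (\<exists>D. ((\<lambda>s. rayleigh p J (u s)) has_real_derivative D) (at t) \<and> D \<le> 0))
       \<and> (\<forall>t. 0 < t \<and> ereal t < T_ex u \<longrightarrow>
            ((((\<lambda>s. rayleigh p J (u s)) has_real_derivative 0) (at t))
             \<longleftrightarrow> (eigenfunction p J (u t) (rayleigh p J (u t))
                  \<and> (\<lambda>s. rayleigh p J (u s)) differentiable (at t))))"
proof -
  obtain z where "min_norm_flow J u z"
    using gradient_flow_imp_min_norm_flow[OF proper flow] .
  then interpret homogeneous_min_norm_flow J u z p
    using p conv hom by (simp add: homogeneous_min_norm_flow_def homogeneous_min_norm_flow_axioms_def)
  show ?thesis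
    using AE_rayleigh_DERIV_nonpos rayleigh_DERIV_zero_iff_eigenfunction by blast
qed

end
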